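(* Let $\Gamma\subset\mathbb{R}$ satisfy property (C). Then for every $0<\epsilon<1$ there exist $N\in\mathbb{N}$ and $\eta_1,\dots,\eta_N\in\Gamma$ such that the exponential polynomial $P(t)=\frac{1}{N}\sum_{j=1}^N e^{i\eta_j t}$ satisfies $|P(t)|\leq\epsilon$ for all $t$ with $\epsilon<|t|<1/\epsilon$.
   Context: Property (C) of a set $\Gamma$: for every $m\in\mathbb{N}$ there are rationally independent numbers $q_1,\dots,q_m$ such that for every $N\in\mathbb{N}$ there exist $a_1,\dots,a_m$ with $\bigcup_{j=1}^m\{a_j+q_j,a_j+2q_j,\dots,a_j+Nq_j\}\subset\Gamma$. *)

theory Defs
  imports Complex_Main
begin

definition rationally_independent :: "(nat \<Rightarrow> real) \<Rightarrow> nat \<Rightarrow> bool" where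
  "rationally_independent q m \<longleftrightarrow>
     (\<forall>c :: nat \<Rightarrow> rat. (\<Sum>j=1..m. of_rat (c j) * q j) = 0 \<longrightarrow> (\<forall>j\<in>{1..m}. c j = 0))"

definition property_C :: "real set \<Rightarrow> bool" where
  "property_C \<Gamma> \<longleftrightarrow>
     (\<forall>m::nat. \<exists>q :: nat \<Rightarrow> real. rationally_independent q m \<and>
        (\<forall>N::nat. \<exists>a :: nat \<Rightarrow> real.
           (\<Union>j\<in>{1..m}. {a j + real k * q j | k. k \<in> {1..N}}) \<subseteq> \<Gamma>))"

end

theory Submission
  imports Defs "HOL-Analysis.Analysis"
begin

text \<open>
  If \<open>q\<^sub>1, \<dots>, q\<^sub>m\<close> are rationally independent and \<open>t \<noteq> 0\<close>, then at most one of the numbers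
  \<open>cis (q\<^sub>j t)\<close> equals 1; by compactness of \<open>\<epsilon> \<le> |t| \<le> 1/\<epsilon>\<close> there is a \<open>c > 0\<close> such that,
  for each such \<open>t\<close>, at most one \<open>j\<close> has \<open>|cis (q\<^sub>j t) - 1| < c\<close>. Let the frequencies \<open>\<eta>\<close> run
  through \<open>m\<close> progressions \<open>a\<^sub>j + k q\<^sub>j\<close> (\<open>1 \<le> k \<le> N\<close>) inside \<open>\<Gamma>\<close>. Each progression contributes
  a geometric sum of modulus at most \<open>2/c\<close>, except possibly one, which contributes at most \<open>N\<close>;
  hence \<open>|P(t)| \<le> 1/m + 2/(c N)\<close>, which is at most \<open>\<epsilon>\<close> once \<open>m\<close> and then \<open>N\<close> are large.
\<close>

lemma norm_geometric_sum_le_card: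
  fixes z :: complex
  assumes "norm z = 1"
  shows "norm (\<Sum>k<N. z ^ k) \<le> real N"
proof -
  have "norm (\<Sum>k<N. z ^ k) \<le> (\<Sum>k<N. norm (z ^ k))" by (rule norm_sum)
  also have "\<dots> = real N" using assms by (simp add: norm_power)
  finally show ?thesis .
qed

lemma norm_geometric_sum_le:
  fixes z :: complex
  assumes "norm z = 1" "z \<noteq> 1"
  shows "norm (\<Sum>k<N. z ^ k) \<le> 2 / norm (z - 1)"
proof -
  have "norm (z ^ N - 1) \<le> norm (z ^ N) + norm (1::complex)" by (rule norm_triangle_ineq4)
  also have "\<dots> = 2" using assms by (simp add: norm_power)
  finally have "norm (z ^ N - 1) \<le> 2" .
  then show ?thesis
    using assms by (simp add: geometric_sum norm_divide divide_right_mono)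
qed

lemma sum_cis_progression:
  "(\<Sum>k=1..N. cis ((a + real k * q) * t)) = cis (a * t) * cis (q * t) * (\<Sum>k<N. cis (q * t) ^ k)"
proof -
  have "cis ((a + real (Suc k) * q) * t) = cis (a * t) * cis (q * t) * cis (q * t) ^ k" for k
    by (simp add: Complex.DeMoivre cis_mult algebra_simps)
  then show ?thesis by (simp add: sum.atLeast1_atMost_eq sum_distrib_left)
qed

lemma norm_sum_cis_progression:
  "norm (\<Sum>k=1..N. cis ((a + real k * q) * t)) = norm (\<Sum>k<N. cis (q * t) ^ k)"
  unfolding sum_cis_progression by (simp add: norm_mult)

lemma norm_sum_cis_progression_le:
  assumes "0 < c" "c \<le> norm (cis (q * t) - 1)"
  shows "norm (\<Sum>k=1..N. cis ((a + real k * q) * t)) \<le> 2 / c"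
proof -
  have "cis (q * t) \<noteq> 1" using assms by auto
  then have "norm (\<Sum>k<N. cis (q * t) ^ k) \<le> 2 / norm (cis (q * t) - 1)"
    by (intro norm_geometric_sum_le) simp_all
  also have "\<dots> \<le> 2 / c" using assms by (auto intro!: divide_left_mono mult_pos_pos)
  finally show ?thesis by (simp only: norm_sum_cis_progression)
qed

lemma sum_le_with_one_exception:
  fixes f :: "'a \<Rightarrow> real"
  assumes "finite I" "0 \<le> B" "0 \<le> b" "\<And>i. i \<in> I \<Longrightarrow> f i \<le> B"
    and "\<And>i j. i \<in> I \<Longrightarrow> j \<in> I \<Longrightarrow> i \<noteq> j \<Longrightarrow> f i \<le> b \<or> f j \<le> b"
  shows "sum f I \<le> B + real (card I) * b"
proof (cases "\<exists>i\<in>I. b < f i")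
  case True
  then obtain i where i: "i \<in> I" "b < f i" by blast
  have rest: "f j \<le> b" if "j \<in> I - {i}" for j
    using assms(5)[of i j] i that by force
  have "sum f I = f i + sum f (I - {i})" using assms(1) i(1) by (rule sum.remove)
  also have "\<dots> \<le> B + card (I - {i}) * b"
    using assms(4)[OF i(1)] sum_bounded_above[of "I - {i}" f b] rest by force
  also have "\<dots> \<le> B + card I * b"
    using assms(3) by (simp add: card_Diff1_le mult_right_mono)
  finally show ?thesis .
next
  case False
  then have "sum f I \<le> real (card I) * b" using sum_bounded_above[of I f b] by force
  then show ?thesis using assms(2) by linarith
qed

lemma norm_sum_cis_progressions_le:
  assumes "0 < c"
    and sep: "\<And>j l. j \<in> {1..m} \<Longrightarrow> l \<in> {1..m} \<Longrightarrow> j \<noteq> l \<Longrightarrow>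
               c \<le> norm (cis (q j * t) - 1) \<or> c \<le> norm (cis (q l * t) - 1)"
  shows "norm (\<Sum>j=1..m. \<Sum>k=1..N. cis ((a j + real k * q j) * t)) \<le> real N + real m * (2 / c)"
proof -
  let ?S = "\<lambda>j. norm (\<Sum>k=1..N. cis ((a j + real k * q j) * t))"
  have "norm (\<Sum>j=1..m. \<Sum>k=1..N. cis ((a j + real k * q j) * t)) \<le> (\<Sum>j=1..m. ?S j)"
    by (rule norm_sum)
  also have "\<dots> \<le> real N + real (card {1..m}) * (2 / c)"
  proof (rule sum_le_with_one_exception)
    show "?S j \<le> real N" for j
      by (simp only: norm_sum_cis_progression norm_geometric_sum_le_card norm_cis)
    show "?S j \<le> 2 / c \<or> ?S l \<le> 2 / c" if "j \<in> {1..m}" "l \<in> {1..m}" "j \<noteq> l" for j l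
      using sep[OF that] norm_sum_cis_progression_le[OF \<open>0 < c\<close>] by blast
  qed (use \<open>0 < c\<close> in auto)
  finally show ?thesis by simp
qed

lemma rationally_independent_nonzero:
  assumes "rationally_independent q m" "j \<in> {1..m}"
  shows "q j \<noteq> 0"
proof
  assume "q j = 0"
  define c :: "nat \<Rightarrow> rat" where "c i = (if i = j then 1 else 0)" for i
  have "(\<Sum>i=1..m. of_rat (c i) * q i) = (\<Sum>i=1..m. if i = j then q j else 0)"
    by (intro sum.cong) (auto simp: c_def)
  also have "\<dots> = 0" using \<open>q j = 0\<close> by simp
  finally have "c j = 0" using assms unfolding rationally_independent_def by blast
  then show False by (simp add: c_def)
qed

lemma rationally_independent_int_relation:
  assumes "rationally_independent q m" "j \<in> {1..m}" "l \<in> {1..m}" "j \<noteq> l"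
    and "of_int x * q j = of_int y * q l"
  shows "x = 0 \<and> y = 0"
proof -
  define c :: "nat \<Rightarrow> rat" where "c i = (if i = j then of_int x else 0) - (if i = l then of_int y else 0)" for i
  have "(\<Sum>i=1..m. of_rat (c i) * q i)
      = (\<Sum>i=1..m. (if i = j then of_int x * q j else 0) - (if i = l then of_int y * q l else 0))"
    by (intro sum.cong) (auto simp: c_def of_rat_diff left_diff_distrib)
  also have "\<dots> = 0" using assms(2,3,5) by (simp add: sum_subtractf)
  finally have "\<forall>i\<in>{1..m}. c i = 0" using assms(1) unfolding rationally_independent_def by blast
  then show ?thesis using assms(2-4) by (force simp: c_def)
qed

lemma rationally_independent_cis_not_both_1:
  assumes "rationally_independent q m" "j \<in> {1..m}" "l \<in> {1..m}" "j \<noteq> l" "t \<noteq> 0"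
  shows "cis (q j * t) \<noteq> 1 \<or> cis (q l * t) \<noteq> 1"
proof (rule ccontr)
  assume "\<not> ?thesis"
  then obtain x y :: int where x: "q j * t = of_int (2 * x) * pi" and y: "q l * t = of_int (2 * y) * pi"
    by (auto simp: cis_conv_exp exp_eq_1)
  have "(of_int y * q j) * t = of_int y * (q j * t)" by (simp add: mult.assoc)
  also have "\<dots> = of_int x * (q l * t)" unfolding x y by (simp add: algebra_simps)
  also have "\<dots> = (of_int x * q l) * t" by (simp add: mult.assoc)
  finally have "of_int y * q j = of_int x * q l" using \<open>t \<noteq> 0\<close> by simp
  then have "x = 0" using rationally_independent_int_relation[OF assms(1-4)] by blast
  then show False
    using x rationally_independent_nonzero[OF assms(1,2)] \<open>t \<noteq> 0\<close> by simp
qed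

lemma compact_continuous_pos_bounded_below:
  fixes f :: "'a::topological_space \<Rightarrow> real"
  assumes "compact K" "continuous_on K f" "\<And>t. t \<in> K \<Longrightarrow> 0 < f t"
  shows "\<exists>c>0. \<forall>t\<in>K. c \<le> f t"
proof (cases "K = {}")
  case False
  then obtain t0 where "t0 \<in> K" "\<forall>t\<in>K. f t0 \<le> f t"
    using continuous_attains_inf[OF assms(1) _ assms(2)] by blast
  then show ?thesis using assms(3) by blast
qed (auto intro!: exI[of _ 1])

lemma finite_uniform_pos_bound:
  fixes f :: "'i \<Rightarrow> 'a \<Rightarrow> real"
  assumes "finite I" "\<And>i. i \<in> I \<Longrightarrow> \<exists>c>0. \<forall>t\<in>K. c \<le> f i t"
  shows "\<exists>c>0. \<forall>i\<in>I. \<forall>t\<in>K. c \<le> f i t"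
  using assms
proof (induction I rule: finite_induct)
  case (insert i I)
  obtain c1 where "c1 > 0" "\<forall>i\<in>I. \<forall>t\<in>K. c1 \<le> f i t" using insert by blast
  moreover obtain c2 where "c2 > 0" "\<forall>t\<in>K. c2 \<le> f i t" using insert.prems by blast
  ultimately show ?case by (intro exI[of _ "min c1 c2"]) force
qed (auto intro: exI[of _ 1])

lemma rationally_independent_cis_separation:
  assumes "compact K" "0 \<notin> K" "rationally_independent q m"
  shows "\<exists>c>0. \<forall>t\<in>K. \<forall>j\<in>{1..m}. \<forall>l\<in>{1..m}. j \<noteq> l \<longrightarrow>
           c \<le> norm (cis (q j * t) - 1) \<or> c \<le> norm (cis (q l * t) - 1)"
proof -
  define d where "d p t = max (norm (cis (q (fst p) * t) - 1)) (norm (cis (q (snd p) * t) - 1))" for p t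
  define P where "P = {(j, l). j \<in> {1..m} \<and> l \<in> {1..m} \<and> j \<noteq> l}"
  have "finite P" unfolding P_def by (rule finite_subset[of _ "{1..m} \<times> {1..m}"]) auto
  moreover have "\<exists>c>0. \<forall>t\<in>K. c \<le> d p t" if "p \<in> P" for p
  proof (rule compact_continuous_pos_bounded_below[OF assms(1)])
    show "continuous_on K (d p)" unfolding d_def by (intro continuous_intros)
    show "0 < d p t" if "t \<in> K" for t
    proof -
      obtain j l where p: "p = (j, l)" "j \<in> {1..m}" "l \<in> {1..m}" "j \<noteq> l"
        using \<open>p \<in> P\<close> by (auto simp: P_def)
      have "t \<noteq> 0" using that assms(2) by auto
      then show ?thesis
        using rationally_independent_cis_not_both_1[OF assms(3) p(2-4)]
        by (auto simp: d_def p(1) less_max_iff_disj)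
    qed
  qed
  ultimately obtain c where c: "c > 0" "\<forall>p\<in>P. \<forall>t\<in>K. c \<le> d p t"
    using finite_uniform_pos_bound by blast
  show ?thesis
  proof (intro exI[of _ c] conjI ballI impI)
    fix t j l assume "t \<in> K" "j \<in> {1..m}" "l \<in> {1..m}" "j \<noteq> l"
    then have "c \<le> d (j, l) t" using c(2) by (auto simp: P_def)
    then show "c \<le> norm (cis (q j * t) - 1) \<or> c \<le> norm (cis (q l * t) - 1)"
      by (simp add: d_def le_max_iff_disj)
  qed (rule c(1))
qed

lemma sum_atLeast1_div_mod_regroup:
  fixes g :: "nat \<Rightarrow> nat \<Rightarrow> 'a::comm_monoid_add"
  shows "(\<Sum>i=1..m*N. g ((i - 1) div N + 1) ((i - 1) mod N + 1)) = (\<Sum>j=1..m. \<Sum>k=1..N. g j k)"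
proof (cases "N = 0")
  case False
  define h where "h i = g (i div N + 1) (i mod N + 1)" for i
  have "(\<Sum>i=1..m*N. g ((i - 1) div N + 1) ((i - 1) mod N + 1)) = (\<Sum>i<m*N. h i)"
    by (simp add: h_def sum.atLeast1_atMost_eq)
  also have "\<dots> = (\<Sum>j<m. \<Sum>i\<in>{j*N..<j*N + N}. h i)"
    by (rule sum.nat_group [symmetric])
  also have "\<dots> = (\<Sum>j<m. \<Sum>k<N. h (j*N + k))"
  proof (rule sum.cong [OF refl])
    fix j
    show "(\<Sum>i\<in>{j*N..<j*N + N}. h i) = (\<Sum>k<N. h (j*N + k))"
      using sum.shift_bounds_nat_ivl[of h 0 "j * N" N] by (simp add: atLeast0LessThan add.commute)
  qed
  also have "\<dots> = (\<Sum>j<m. \<Sum>k<N. g (j + 1) (k + 1))"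
    using False by (intro sum.cong) (auto simp: h_def)
  also have "\<dots> = (\<Sum>j=1..m. \<Sum>k=1..N. g j k)"
    by (simp add: sum.atLeast1_atMost_eq)
  finally show ?thesis .
qed simp

text \<open>Enumerates the points \<open>a j + k * q j\<close> (\<open>1 \<le> j \<le> m\<close>, \<open>1 \<le> k \<le> N\<close>) as \<open>i = (j - 1) * N + k\<close>
  ranges over \<open>{1..m*N}\<close>.\<close>

definition progression_points :: "nat \<Rightarrow> (nat \<Rightarrow> real) \<Rightarrow> (nat \<Rightarrow> real) \<Rightarrow> nat \<Rightarrow> real" where
  "progression_points N a q i = a ((i - 1) div N + 1) + real ((i - 1) mod N + 1) * q ((i - 1) div N + 1)"

lemma progression_points_mem:
  assumes "i \<in> {1..m*N}"
  shows "progression_points N a q i \<in> (\<Union>j\<in>{1..m}. {a j + real k * q j | k. k \<in> {1..N}})"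
proof -
  have "N > 0" using assms by (auto intro: ccontr)
  then have k: "(i - 1) mod N + 1 \<in> {1..N}" by (simp add: Suc_leI)
  have "(i - 1) div N < m" using assms by (auto intro: less_mult_imp_div_less)
  then have j: "(i - 1) div N + 1 \<in> {1..m}" by simp
  show ?thesis unfolding progression_points_def using j k by blast
qed

lemma sum_progression_points:
  "(\<Sum>i=1..m*N. f (progression_points N a q i)) = (\<Sum>j=1..m. \<Sum>k=1..N. f (a j + real k * q j))"
  unfolding progression_points_def
  by (rule sum_atLeast1_div_mod_regroup [where g = "\<lambda>j k. f (a j + real k * q j)"])

lemma norm_mean_cis_progression_points_le:
  assumes "0 < c" "1 \<le> m" "1 \<le> N"
    and "\<And>j l. j \<in> {1..m} \<Longrightarrow> l \<in> {1..m} \<Longrightarrow> j \<noteq> l \<Longrightarrow>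
           c \<le> norm (cis (q j * t) - 1) \<or> c \<le> norm (cis (q l * t) - 1)"
  shows "norm (1 / of_nat (m*N) * (\<Sum>i=1..m*N. exp (\<i> * complex_of_real (progression_points N a q i * t))))
           \<le> 1 / real m + 2 / (c * real N)"
proof -
  have "norm (\<Sum>i=1..m*N. exp (\<i> * complex_of_real (progression_points N a q i * t)))
      = norm (\<Sum>j=1..m. \<Sum>k=1..N. cis ((a j + real k * q j) * t))"
    unfolding cis_conv_exp [symmetric]
    by (rule arg_cong [OF sum_progression_points [where f = "\<lambda>x. cis (x * t)"]])
  also have "\<dots> \<le> real N + real m * (2 / c)"
    using norm_sum_cis_progressions_le assms(1,4) by blast
  finally have "norm (1 / of_nat (m*N) * (\<Sum>i=1..m*N. exp (\<i> * complex_of_real (progression_points N a q i * t))))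
      \<le> (real N + real m * (2 / c)) / real (m*N)"
    by (simp add: norm_mult norm_divide divide_right_mono)
  also have "\<dots> = 1 / real m + 2 / (c * real N)"
    using assms(1-3) by (simp add: field_simps)
  finally show ?thesis .
qed

lemma ex_nat_divide_less:
  fixes x C :: real
  assumes "0 < x"
  obtains n :: nat where "1 \<le> n" "C / real n < x"
proof -
  obtain n :: nat where n: "max 1 (C / x) < real n" using reals_Archimedean2 by blast
  then have "1 \<le> n" by simp
  moreover have "C / real n < x" using n assms by (simp add: field_simps)
  ultimately show thesis by (rule that)
qed

theorem lemma5:
  fixes \<Gamma> :: "real set" and \<epsilon> :: real
  assumes "property_C \<Gamma>"
    and "0 < \<epsilon>" and "\<epsilon> < 1"
  shows "\<exists>N::nat. N \<ge> 1 \<and> (\<exists>\<eta> :: nat \<Rightarrow> real. (\<forall>j\<in>{1..N}. \<eta> j \<in> \<Gamma>) \<and>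
           (\<forall>t::real. \<epsilon> < \<bar>t\<bar> \<and> \<bar>t\<bar> < 1 / \<epsilon> \<longrightarrow>
              cmod ((1 / of_nat N) * (\<Sum>j=1..N. exp (\<i> * complex_of_real (\<eta> j * t)))) \<le> \<epsilon>))"
proof -
  obtain m :: nat where m: "1 \<le> m" "1 / real m < \<epsilon> / 2"
    using ex_nat_divide_less[of "\<epsilon> / 2" 1] assms(2) by auto
  obtain q where ind: "rationally_independent q m"
    and progressions: "\<forall>N. \<exists>a. (\<Union>j\<in>{1..m}. {a j + real k * q j | k. k \<in> {1..N}}) \<subseteq> \<Gamma>"
    using assms(1) unfolding property_C_def by blast
  define K where "K = cball 0 (1 / \<epsilon>) - ball (0::real) \<epsilon>"
  have "compact K" "0 \<notin> K" using assms(2) by (auto simp: K_def compact_diff)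
  then obtain c where c: "c > 0" and sep: "\<forall>t\<in>K. \<forall>j\<in>{1..m}. \<forall>l\<in>{1..m}. j \<noteq> l \<longrightarrow>
      c \<le> norm (cis (q j * t) - 1) \<or> c \<le> norm (cis (q l * t) - 1)"
    using rationally_independent_cis_separation ind by meson
  obtain N :: nat where N: "1 \<le> N" "2 / c / real N < \<epsilon> / 2"
    using ex_nat_divide_less[of "\<epsilon> / 2" "2 / c"] assms(2) by auto
  obtain a where a: "(\<Union>j\<in>{1..m}. {a j + real k * q j | k. k \<in> {1..N}}) \<subseteq> \<Gamma>"
    using progressions by blast
  have bound: "1 / real m + 2 / (c * real N) \<le> \<epsilon>" using m(2) N(2) by simp
  show ?thesis
  proof (intro exI[of _ "m*N"] exI[of _ "progression_points N a q"] conjI allI ballI impI)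
    show "1 \<le> m * N" using m N by simp
    show "progression_points N a q i \<in> \<Gamma>" if "i \<in> {1..m*N}" for i
      using progression_points_mem[OF that] a by blast
    show "norm (1 / of_nat (m*N) * (\<Sum>i=1..m*N. exp (\<i> * complex_of_real (progression_points N a q i * t)))) \<le> \<epsilon>"
      if "\<epsilon> < \<bar>t\<bar> \<and> \<bar>t\<bar> < 1 / \<epsilon>" for t
    proof -
      have "t \<in> K" using that by (auto simp: K_def)
      then have "c \<le> norm (cis (q j * t) - 1) \<or> c \<le> norm (cis (q l * t) - 1)"
        if "j \<in> {1..m}" "l \<in> {1..m}" "j \<noteq> l" for j l
        using sep that by blast
      from norm_mean_cis_progression_points_le[OF c m(1) N(1) this] bound
      show ?thesis by (rule order_trans)
    qed
  qed
qed

end
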